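(* Let $m_1 > m_2 \ge 2$ and $z \ge 1$ be integers and let $G_j$ be a second kind of ideal center graph (defined in the context): its vertex set is $\{v_j\}\cup A_1 \cup B$, where $v_j$ is adjacent to all other vertices, $A_1$ is a clique of size $m_1-1$ (so $A_1\cup\{v_j\}$ is the maximum clique, of size $m_1$), $B$ induces a complete multipartite graph with $m_2-1$ parts each an independent set of $z$ vertices, and there are no edges between $A_1$ and $B$. Let $A$ be the adjacency matrix of $G_j$, $\lambda_1$ its largest eigenvalue with eigenvector $|\lambda_1\rangle$, and for a vertex $v_l$ let $p_{l,1} = \langle l|\lambda_1\rangle\langle\lambda_1|j\rangle$. Let $v_l$ be a member of the maximum clique of $G_j$ and $v_k$ a vertex not in the maximum clique. If \[ m_1 - 2 < z(m_2-2), \] then \[ p_{l,1} < p_{k,1}, \] i.e. (for $v_l\neq v_j$) $\left|\frac{1}{m_1-2-\lambda_1}\right| < \left|\frac{1}{z(m_2-2)-\lambda_1}\right|$.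
   Context: A graph $G_j$ is a center graph with center vertex $v_j$ if $v_j$ is adjacent to all other vertices. The second kind of ideal center graph is obtained from a center graph consisting of two cliques sharing only the center vertex (with no edges between their other vertices) by replacing the smaller clique (minus the center) with a complete multipartite graph, all of whose vertices remain adjacent to the center, while keeping the maximum clique unchanged; here $z$ is the number of vertices in each independent set (part) and $m_2-1$ the number of parts. The continuous time quantum walk on a graph with adjacency matrix $A$ (vertices identified with an orthonormal basis $|1\rangle,\dots,|N\rangle$) has amplitude $\alpha_{l,j}(t) = \langle l|e^{iAt}|j\rangle = \sum_n e^{i\lambda_n t}\langle l|\lambda_n\rangle\langle\lambda_n|j\rangle$, where $\lambda_1\ge\dots\ge\lambda_N$ are the eigenvalues of $A$ with orthonormal eigenvectors $|\lambda_n\rangle$; $p_{l,n}=\langle l|\lambda_n\rangle\langle\lambda_n|j\rangle$ is the intensity of frequency $\lambda_n$ in $\alpha_{l,j}$. *)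

theory Defs
  imports Complex_Main
begin

text \<open>Vertex 0 is the center v_j;
  vertices 1 ..< m1 form the clique A_1 (size m1 - 1);
  vertices m1 ..< skc_N form B, the complete multipartite graph with
  m2 - 1 parts of z vertices each, vertex m1 + q*z + r lying in part q.\<close>

definition skc_N :: "nat \<Rightarrow> nat \<Rightarrow> nat \<Rightarrow> nat" where
  "skc_N m1 m2 z = 1 + (m1 - 1) + z * (m2 - 1)"

definition skc_adj :: "nat \<Rightarrow> nat \<Rightarrow> nat \<Rightarrow> nat \<Rightarrow> nat \<Rightarrow> bool" where
  "skc_adj m1 m2 z u v \<longleftrightarrow>
     u < skc_N m1 m2 z \<and> v < skc_N m1 m2 z \<and> u \<noteq> v \<and>
     (u = 0 \<or> v = 0 \<or> (u < m1 \<and> v < m1) \<or>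
      (m1 \<le> u \<and> m1 \<le> v \<and> (u - m1) div z \<noteq> (v - m1) div z))"

definition skc_A :: "nat \<Rightarrow> nat \<Rightarrow> nat \<Rightarrow> nat \<Rightarrow> nat \<Rightarrow> real" where
  "skc_A m1 m2 z u v = (if skc_adj m1 m2 z u v then 1 else 0)"

definition is_eigvec :: "nat \<Rightarrow> (nat \<Rightarrow> nat \<Rightarrow> real) \<Rightarrow> real \<Rightarrow> (nat \<Rightarrow> real) \<Rightarrow> bool" where
  "is_eigvec n M \<mu> y \<longleftrightarrow>
     (\<forall>i<n. (\<Sum>k<n. M i k * y k) = \<mu> * y i) \<and> (\<exists>i<n. y i \<noteq> 0)"

definition is_eigval :: "nat \<Rightarrow> (nat \<Rightarrow> nat \<Rightarrow> real) \<Rightarrow> real \<Rightarrow> bool" where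
  "is_eigval n M \<mu> \<longleftrightarrow> (\<exists>y. is_eigvec n M \<mu> y)"

definition intensity :: "(nat \<Rightarrow> real) \<Rightarrow> nat \<Rightarrow> nat \<Rightarrow> real" where
  "intensity x l j = x l * x j"

end

theory Submission
  imports Defs
begin

text \<open>The partition of the vertices into the centre, the clique A_1 and the multipartite
  part B is equitable. Hence an eigenvector x for an eigenvalue \<lambda> exceeding both internal
  degrees d_A = m_1 - 2 and d_B = z(m_2 - 2) is constant on A_1 and on B, with
  x_a (\<lambda> - d_A) = x_0 = x_b (\<lambda> - d_B), so p_{a,1} = x_0^2/(\<lambda> - d_A) and
  p_{b,1} = x_0^2/(\<lambda> - d_B). The largest eigenvalue does exceed both degrees: the quotient
  matrix of the partition has such an eigenvalue, and lifting its eigenvector gives an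
  eigenvector of the graph. The claim thus reduces to d_A < d_B, once x_0 \<noteq> 0 is known.\<close>

lemma sum_cong_const:
  "(\<And>k. k \<in> S \<Longrightarrow> y k = v) \<Longrightarrow> sum y S = real (card S) * (v :: real)"
  by (simp add: sum.cong[of S S y "\<lambda>_. v"])

lemma exists_root_above:
  fixes c n s :: real
  assumes "c < n" "0 < s" "0 < c + 1"
  shows "\<exists>\<mu>>n. (c + 1) * (\<mu> - n) + s * (\<mu> - c) = \<mu> * (\<mu> - c) * (\<mu> - n)"
proof -
  define f where "f \<mu> = (c + 1) * (\<mu> - n) + s * (\<mu> - c) - \<mu> * (\<mu> - c) * (\<mu> - n)" for \<mu>
  define T where "T = \<bar>c\<bar> + \<bar>n\<bar> + s + 2"
  have T: "T - c \<ge> 1" "T - n \<ge> 1" "T > c + 1 + s"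
    using assms unfolding T_def by auto
  have "(c + 1) * (T - n) + s * (T - c) \<le> (c + 1) * ((T - c) * (T - n)) + s * ((T - c) * (T - n))"
    using T assms
    by (intro add_mono mult_left_mono)
       (auto intro: mult_right_mono[of 1 "T - c" "T - n", simplified]
                    mult_left_mono[of 1 "T - n" "T - c", simplified])
  also have "\<dots> = (c + 1 + s) * ((T - c) * (T - n))"
    by (simp add: algebra_simps)
  also have "\<dots> < T * ((T - c) * (T - n))"
    using T by (intro mult_strict_right_mono) auto
  finally have "f T < 0"
    unfolding f_def by (simp add: algebra_simps)
  moreover have "f n > 0"
    unfolding f_def using assms by simp
  moreover have "\<forall>x. n \<le> x \<and> x \<le> T \<longrightarrow> isCont f x"
    unfolding f_def by (auto intro!: continuous_intros)
  ultimately obtain \<mu> where "n \<le> \<mu>" "f \<mu> = 0"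
    using IVT2[of f T 0 n] T by force
  moreover have "\<mu> \<noteq> n"
    using \<open>f n > 0\<close> \<open>f \<mu> = 0\<close> by auto
  ultimately show ?thesis
    unfolding f_def by (intro exI[of _ \<mu>]) auto
qed

lemma row_value_identity:
  fixes \<mu> d s t :: real
  assumes "\<mu> \<noteq> d" "s - t = d"
  shows "1 + (s * (1 / (\<mu> - d)) - t * (1 / (\<mu> - d))) = \<mu> * (1 / (\<mu> - d))"
proof -
  have "s * (1 / (\<mu> - d)) - t * (1 / (\<mu> - d)) = d / (\<mu> - d)"
    using assms(2) by (simp flip: diff_divide_distrib)
  then show ?thesis
    using assms(1) by (simp add: field_simps)
qed

lemma div_eq_iff_bounds:
  "0 < (z :: nat) \<Longrightarrow> d div z = q \<longleftrightarrow> q * z \<le> d \<and> d < q * z + z"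
  by (metis add.commute div_nat_eqI div_times_less_eq_dividend
      dividend_less_times_div mult.commute mult_Suc)

lemma skc_A_row_sum:
  "(\<Sum>k<skc_N m1 m2 z. skc_A m1 m2 z i k * y k) = sum y {k. k < skc_N m1 m2 z \<and> skc_adj m1 m2 z i k}"
proof -
  have "(\<Sum>k<skc_N m1 m2 z. skc_A m1 m2 z i k * y k)
      = (\<Sum>k<skc_N m1 m2 z. if skc_adj m1 m2 z i k then y k else 0)"
    by (intro sum.cong) (auto simp: skc_A_def)
  also have "\<dots> = sum y {k \<in> {..<skc_N m1 m2 z}. skc_adj m1 m2 z i k}"
    by (rule sum.inter_filter[symmetric]) simp
  finally show ?thesis
    by simp
qed

locale second_kind_center_graph =
  fixes m1 m2 z :: nat
  assumes two_le_m1: "2 \<le> m1" and two_le_m2: "2 \<le> m2" and z_pos: "1 \<le> z"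
begin

abbreviation N :: nat where "N \<equiv> skc_N m1 m2 z"
abbreviation Adj :: "nat \<Rightarrow> nat \<Rightarrow> real" where "Adj \<equiv> skc_A m1 m2 z"
abbreviation A1 :: "nat set" where "A1 \<equiv> {1..<m1}"
abbreviation B :: "nat set" where "B \<equiv> {m1..<N}"
abbreviation dA :: real where "dA \<equiv> real m1 - 2"
abbreviation dB :: real where "dB \<equiv> real z * (real m2 - 2)"

definition part :: "nat \<Rightarrow> nat set" where
  "part b = {k \<in> B. (k - m1) div z = (b - m1) div z}"

lemma N_eq: "N = m1 + z * (m2 - 1)"
  using two_le_m1 by (simp add: skc_N_def)

lemma part_subset: "part b \<subseteq> B"
  by (auto simp: part_def)

lemma part_eq: "b' \<in> part b \<Longrightarrow> part b' = part b"
  by (simp add: part_def)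

lemma part_eq_interval:
  assumes "b \<in> B"
  shows "part b = {m1 + (b - m1) div z * z ..< m1 + (b - m1) div z * z + z}"
proof -
  define q where "q = (b - m1) div z"
  have "b - m1 < (m2 - 1) * z"
    using assms N_eq by (simp add: mult.commute less_diff_conv2)
  hence "q < m2 - 1"
    unfolding q_def using z_pos by (simp add: less_mult_imp_div_less)
  hence "(q + 1) * z \<le> (m2 - 1) * z"
    by (intro mult_le_mono1) simp
  hence "m1 + q * z + z \<le> N"
    by (simp add: N_eq algebra_simps)
  then show ?thesis
    using z_pos unfolding part_def q_def[symmetric] by (auto simp: div_eq_iff_bounds)
qed

lemma card_part: "b \<in> B \<Longrightarrow> card (part b) = z"
  by (simp add: part_eq_interval)

lemma card_A1: "real (card A1) = dA + 1"
  using two_le_m1 by (simp add: of_nat_diff)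

lemma card_B: "real (card B) = real z * (real m2 - 1)"
  using two_le_m2 by (simp add: N_eq of_nat_diff)

lemma neighbours_center: "{k. k < N \<and> skc_adj m1 m2 z 0 k} = A1 \<union> B"
  using two_le_m1 by (auto simp: skc_adj_def N_eq)

lemma neighbours_A1: "a \<in> A1 \<Longrightarrow> {k. k < N \<and> skc_adj m1 m2 z a k} = insert 0 (A1 - {a})"
  by (auto simp: skc_adj_def N_eq)

lemma neighbours_B: "b \<in> B \<Longrightarrow> {k. k < N \<and> skc_adj m1 m2 z b k} = insert 0 (B - part b)"
  using two_le_m1 by (auto simp: skc_adj_def part_def)

lemma row_sum_center: "(\<Sum>k<N. Adj 0 k * y k) = sum y A1 + sum y B"
  by (simp add: skc_A_row_sum neighbours_center sum.union_disjoint)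

lemma row_sum_A1: "a \<in> A1 \<Longrightarrow> (\<Sum>k<N. Adj a k * y k) = y 0 + (sum y A1 - y a)"
  by (simp add: skc_A_row_sum neighbours_A1 sum_diff1)

lemma row_sum_B: "b \<in> B \<Longrightarrow> (\<Sum>k<N. Adj b k * y k) = y 0 + (sum y B - sum y (part b))"
  using two_le_m1 part_subset[of b]
  by (simp add: skc_A_row_sum neighbours_B sum_diff finite_subset)

lemma sum_A1: "(\<And>a. a \<in> A1 \<Longrightarrow> y a = v) \<Longrightarrow> sum y A1 = (dA + 1) * v"
  unfolding card_A1[symmetric] by (rule sum_cong_const)

lemma sum_B: "(\<And>b. b \<in> B \<Longrightarrow> y b = v) \<Longrightarrow> sum y B = real z * (real m2 - 1) * v"
  unfolding card_B[symmetric] by (rule sum_cong_const)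

lemma sum_part: "b \<in> B \<Longrightarrow> (\<And>k. k \<in> part b \<Longrightarrow> y k = v) \<Longrightarrow> sum y (part b) = real z * v"
  by (simp add: sum_cong_const card_part)

lemma vertex_cases:
  assumes "i < N"
  obtains "i = 0" | "i \<in> A1" | "i \<in> B"
  using assms by fastforce

definition quotient_vec :: "real \<Rightarrow> nat \<Rightarrow> real" where
  "quotient_vec \<mu> i = (if i = 0 then 1 else if i < m1 then 1 / (\<mu> - dA) else 1 / (\<mu> - dB))"

text \<open>The hypothesis on \<mu> is the characteristic equation of the quotient matrix
  [[0, m_1 - 1, z(m_2 - 1)], [1, d_A, 0], [1, 0, d_B]] of the partition {0}, A_1, B,
  divided by (\<mu> - d_A)(\<mu> - d_B).\<close>
lemma quotient_vec_is_eigvec: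
  assumes "\<mu> \<noteq> dA" "\<mu> \<noteq> dB"
    and char_eq: "(dA + 1) * (\<mu> - dB) + real z * (real m2 - 1) * (\<mu> - dA) = \<mu> * (\<mu> - dA) * (\<mu> - dB)"
  shows "is_eigvec N Adj \<mu> (quotient_vec \<mu>)"
  unfolding is_eigvec_def
proof (intro conjI allI impI)
  show "\<exists>i<N. quotient_vec \<mu> i \<noteq> 0"
    using two_le_m1 by (intro exI[of _ 0]) (simp add: N_eq quotient_vec_def)
  have on_A1: "quotient_vec \<mu> a = 1 / (\<mu> - dA)" if "a \<in> A1" for a
    using that by (simp add: quotient_vec_def)
  have on_B: "quotient_vec \<mu> b = 1 / (\<mu> - dB)" if "b \<in> B" for b
    using that two_le_m1 by (simp add: quotient_vec_def)
  have at_0: "quotient_vec \<mu> 0 = 1"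
    by (simp add: quotient_vec_def)
  fix i assume "i < N"
  then show "(\<Sum>k<N. Adj i k * quotient_vec \<mu> k) = \<mu> * quotient_vec \<mu> i"
  proof (cases rule: vertex_cases)
    case 1
    have "(\<Sum>k<N. Adj i k * quotient_vec \<mu> k)
        = (dA + 1) * (1 / (\<mu> - dA)) + real z * (real m2 - 1) * (1 / (\<mu> - dB))"
      unfolding 1 row_sum_center by (simp only: sum_A1[OF on_A1] sum_B[OF on_B])
    also have "\<dots> = ((dA + 1) * (\<mu> - dB) + real z * (real m2 - 1) * (\<mu> - dA))
                     / ((\<mu> - dA) * (\<mu> - dB))"
      using assms(1,2) by (simp add: field_simps)
    also have "\<dots> = \<mu> * quotient_vec \<mu> i"
      unfolding char_eq using 1 assms(1,2) by (simp add: quotient_vec_def)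
    finally show ?thesis .
  next
    case 2
    have "(\<Sum>k<N. Adj i k * quotient_vec \<mu> k) = 1 + ((dA + 1) * (1 / (\<mu> - dA)) - 1 * (1 / (\<mu> - dA)))"
      using 2 by (simp only: row_sum_A1 sum_A1[OF on_A1] on_A1 at_0 mult_1)
    also have "\<dots> = \<mu> * (1 / (\<mu> - dA))"
      using assms(1) by (intro row_value_identity) simp_all
    finally show ?thesis
      using 2 by (simp only: on_A1)
  next
    case 3
    have "sum (quotient_vec \<mu>) (part i) = real z * (1 / (\<mu> - dB))"
      using 3 part_subset by (intro sum_part on_B) blast+
    then have "(\<Sum>k<N. Adj i k * quotient_vec \<mu> k)
        = 1 + (real z * (real m2 - 1) * (1 / (\<mu> - dB)) - real z * (1 / (\<mu> - dB)))"
      using 3 by (simp only: row_sum_B sum_B[OF on_B] at_0)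
    also have "\<dots> = \<mu> * (1 / (\<mu> - dB))"
      using assms(2) by (intro row_value_identity) (simp_all add: algebra_simps)
    finally show ?thesis
      using 3 by (simp only: on_B)
  qed
qed

lemma largest_eigval_gt_degrees:
  assumes "dA < dB" and largest: "\<forall>\<mu>. is_eigval N Adj \<mu> \<longrightarrow> \<mu> \<le> lam"
  shows "dA < lam" "dB < lam"
proof -
  obtain \<mu> where "\<mu> > dB"
    and "(dA + 1) * (\<mu> - dB) + real z * (real m2 - 1) * (\<mu> - dA) = \<mu> * (\<mu> - dA) * (\<mu> - dB)"
    using exists_root_above[OF \<open>dA < dB\<close>] two_le_m1 two_le_m2 z_pos by force
  with \<open>dA < dB\<close> have "is_eigvec N Adj \<mu> (quotient_vec \<mu>)"
    by (intro quotient_vec_is_eigvec) auto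
  then have "is_eigval N Adj \<mu>"
    unfolding is_eigval_def by blast
  with largest have "\<mu> \<le> lam"
    by blast
  with \<open>\<mu> > dB\<close> \<open>dA < dB\<close> show "dA < lam" "dB < lam"
    by auto
qed

lemma eigvec_row_sum: "is_eigvec N Adj lam x \<Longrightarrow> i < N \<Longrightarrow> (\<Sum>k<N. Adj i k * x k) = lam * x i"
  by (simp add: is_eigvec_def)

lemma eigvec_A1:
  assumes eig: "is_eigvec N Adj lam x" and "lam \<noteq> -1" and "a \<in> A1"
  shows "x a * (lam - dA) = x 0"
proof -
  define \<alpha> where "\<alpha> = (x 0 + sum x A1) / (lam + 1)"
  have const: "x a' = \<alpha>" if "a' \<in> A1" for a'
  proof -
    have "lam * x a' = x 0 + (sum x A1 - x a')"
      using eigvec_row_sum[OF eig, of a'] row_sum_A1[OF that] that by (simp add: N_eq)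
    then show ?thesis
      using \<open>lam \<noteq> -1\<close> unfolding \<alpha>_def by (simp add: field_simps)
  qed
  have "\<alpha> * (lam + 1) = x 0 + sum x A1"
    using \<open>lam \<noteq> -1\<close> unfolding \<alpha>_def by simp
  also have "\<dots> = x 0 + (dA + 1) * \<alpha>"
    by (simp only: sum_A1[OF const])
  finally show ?thesis
    using const[OF \<open>a \<in> A1\<close>] by (simp add: algebra_simps)
qed

lemma eigvec_B:
  assumes eig: "is_eigvec N Adj lam x" and "lam \<noteq> 0" "lam \<noteq> - real z" and "b \<in> B"
  shows "x b * (lam - dB) = x 0"
proof -
  have row: "lam * x b' = x 0 + (sum x B - sum x (part b'))" if "b' \<in> B" for b'
    using eigvec_row_sum[OF eig, of b'] row_sum_B[OF that] that by simp
  \<comment> \<open>vertices of one part have the same neighbours, hence the same value\<close>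
  have sum_own_part: "sum x (part b') = real z * x b'" if "b' \<in> B" for b'
  proof (rule sum_part[OF that])
    fix k assume "k \<in> part b'"
    then have "k \<in> B" "part k = part b'"
      using part_subset part_eq by blast+
    then have "lam * x k = lam * x b'"
      using row[OF that] row[of k] by simp
    then show "x k = x b'"
      using \<open>lam \<noteq> 0\<close> by simp
  qed
  define \<beta> where "\<beta> = (x 0 + sum x B) / (lam + real z)"
  have const: "x b' = \<beta>" if "b' \<in> B" for b'
    using row[OF that] sum_own_part[OF that] \<open>lam \<noteq> - real z\<close>
    unfolding \<beta>_def by (simp add: field_simps)
  have "\<beta> * (lam + real z) = x 0 + sum x B"
    using \<open>lam \<noteq> - real z\<close> unfolding \<beta>_def by simp
  also have "\<dots> = x 0 + real z * (real m2 - 1) * \<beta>"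
    by (simp only: sum_B[OF const])
  finally show ?thesis
    using const[OF \<open>b \<in> B\<close>] by (simp add: algebra_simps)
qed

lemma intensity_A1:
  assumes "is_eigvec N Adj lam x" "dA < lam" "a \<in> A1"
  shows "intensity x a 0 = (x 0)\<^sup>2 / (lam - dA)"
proof -
  have "x a = x 0 / (lam - dA)"
    using eigvec_A1[OF assms(1) _ assms(3)] assms(2) two_le_m1 by (simp add: field_simps)
  then show ?thesis
    by (simp add: intensity_def power2_eq_square)
qed

lemma intensity_B:
  assumes "is_eigvec N Adj lam x" "dB < lam" "b \<in> B"
  shows "intensity x b 0 = (x 0)\<^sup>2 / (lam - dB)"
proof -
  have "0 \<le> dB"
    using two_le_m2 by simp
  then have "x b = x 0 / (lam - dB)"
    using eigvec_B[OF assms(1) _ _ assms(3)] assms(2) by (simp add: field_simps)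
  then show ?thesis
    by (simp add: intensity_def power2_eq_square)
qed

lemma eigvec_center_nonzero:
  assumes eig: "is_eigvec N Adj lam x" and "dA < lam" "dB < lam"
  shows "x 0 \<noteq> 0"
proof
  assume "x 0 = 0"
  have "0 < lam"
    using two_le_m1 \<open>dA < lam\<close> by simp
  have "x i = 0" if "i < N" for i
    using that
  proof (cases rule: vertex_cases)
    case 1
    with \<open>x 0 = 0\<close> show ?thesis
      by simp
  next
    case 2
    with eigvec_A1[OF eig] \<open>x 0 = 0\<close> \<open>0 < lam\<close> have "x i * (lam - dA) = 0"
      by simp
    with \<open>dA < lam\<close> show ?thesis
      by simp
  next
    case 3
    with eigvec_B[OF eig] \<open>x 0 = 0\<close> \<open>0 < lam\<close> have "x i * (lam - dB) = 0"
      by simp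
    with \<open>dB < lam\<close> show ?thesis
      by simp
  qed
  with eig show False
    unfolding is_eigvec_def by blast
qed

end

theorem theorem2:
  fixes m1 m2 z l k :: nat and lam :: real and x :: "nat \<Rightarrow> real"
  assumes "m1 > m2" and "m2 \<ge> 2" and "z \<ge> 1"
    and "is_eigvec (skc_N m1 m2 z) (skc_A m1 m2 z) lam x"
    and "(\<Sum>i<skc_N m1 m2 z. (x i)\<^sup>2) = 1"
    and "\<forall>\<mu>. is_eigval (skc_N m1 m2 z) (skc_A m1 m2 z) \<mu> \<longrightarrow> \<mu> \<le> lam"
    and "1 \<le> l" and "l < m1"
    and "m1 \<le> k" and "k < skc_N m1 m2 z"
    and "real m1 - 2 < real z * (real m2 - 2)"
  shows "intensity x l 0 < intensity x k 0 \<and>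
         \<bar>1 / (real m1 - 2 - lam)\<bar> < \<bar>1 / (real z * (real m2 - 2) - lam)\<bar>"
proof -
  interpret second_kind_center_graph m1 m2 z
    using assms(1-3) by unfold_locales auto
  note gt = largest_eigval_gt_degrees[OF assms(11,6)]
  have recip: "1 / (lam - dA) < 1 / (lam - dB)"
    using gt assms(11) by (simp add: frac_less2)
  have "(x 0)\<^sup>2 > 0"
    using eigvec_center_nonzero[OF assms(4) gt] by simp
  then have "intensity x l 0 < intensity x k 0"
    using mult_strict_left_mono[OF recip] intensity_A1[OF assms(4) gt(1)]
      intensity_B[OF assms(4) gt(2)] assms(7-10)
    by simp
  moreover have "\<bar>1 / (dA - lam)\<bar> < \<bar>1 / (dB - lam)\<bar>"
    using recip gt by (simp add: abs_minus_commute[of _ lam])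
  ultimately show ?thesis
    by blast
qed

end
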